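(* Let $\mathbf{A}',\mathbf{A}'',\mathbf{B}',\mathbf{B}''$ be $n\times n$ Hermitian non-negative definite matrices such that either $\mathbf{A}'\neq\mathbf{A}''$ or $\mathbf{B}'\neq\mathbf{B}''$. Assume that the Loewner order is total on each of the pairs $(\mathbf{A}',\mathbf{A}'')$ and $(\mathbf{B}',\mathbf{B}'')$, i.e., either $\mathbf{A}'\succeq\mathbf{A}''$ or $\mathbf{A}''\succ\mathbf{A}'$, and either $\mathbf{B}'\succeq\mathbf{B}''$ or $\mathbf{B}''\succ\mathbf{B}'$. Define $\mathbf{M}=(\mathbf{A}''-\mathbf{A}')\left[(\mathbf{I}+\mathbf{A}')^{-1}-(\mathbf{I}+\mathbf{A}'')^{-1}\right]$ and $\mathbf{N}=(\mathbf{B}''-\mathbf{B}')\left[(\mathbf{I}+\mathbf{B}'+\mathbf{A}')^{-1}-(\mathbf{I}+\mathbf{B}''+\mathbf{A}'')^{-1}\right]$. Then $\mathrm{Tr}(\mathbf{M}+\mathbf{N})\ge 0$.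
   Context: $\succeq$ denotes the Loewner order on Hermitian matrices: $\mathbf{X}\succeq\mathbf{Y}$ iff $\mathbf{X}-\mathbf{Y}$ is positive semidefinite; $\mathbf{X}\succ\mathbf{Y}$ iff $\mathbf{X}-\mathbf{Y}$ is positive definite. *)

theory Defs
  imports "HOL-Analysis.Analysis" "HOL-Library.Complex_Order"
begin

definition adjoint_mat :: "complex^'n^'n \<Rightarrow> complex^'n^'n" where
  "adjoint_mat A = (\<chi> i j. cnj (A $ j $ i))"

definition hermitian :: "complex^'n^'n \<Rightarrow> bool" where
  "hermitian A \<longleftrightarrow> adjoint_mat A = A"

definition qform :: "complex^'n^'n \<Rightarrow> complex^'n \<Rightarrow> complex" where
  "qform A x = (\<Sum>i\<in>UNIV. cnj (x $ i) * (A *v x) $ i)"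

text \<open>Positive semidefinite (non-negative definite) and positive definite, via the
  complex order of Complex_Order (so 0 <= z means z is real and non-negative).\<close>
definition psd :: "complex^'n^'n \<Rightarrow> bool" where
  "psd A \<longleftrightarrow> (\<forall>x. 0 \<le> qform A x)"

definition pd :: "complex^'n^'n \<Rightarrow> bool" where
  "pd A \<longleftrightarrow> (\<forall>x. x \<noteq> 0 \<longrightarrow> 0 < qform A x)"

definition loewner_ge :: "complex^'n^'n \<Rightarrow> complex^'n^'n \<Rightarrow> bool" where
  "loewner_ge X Y \<longleftrightarrow> psd (X - Y)"

definition loewner_gt :: "complex^'n^'n \<Rightarrow> complex^'n^'n \<Rightarrow> bool" where
  "loewner_gt X Y \<longleftrightarrow> pd (X - Y)"

end

theory Submission
  imports Defs
begin

text \<open>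
  Write \<open>X = A'' - A'\<close>, \<open>Y = B'' - B'\<close> and \<open>P, Q, R, S\<close> for the inverses of
  \<open>I + A'\<close>, \<open>I + A''\<close>, \<open>I + B' + A'\<close>, \<open>I + B'' + A''\<close>. The resolvent identity gives
  \<open>M = X P X Q\<close> and \<open>N = Y R (X + Y) S\<close>. Inversion is antitone, so \<open>P \<succeq> R\<close> and
  \<open>Q \<succeq> S\<close>; as \<open>Tr (W L) \<ge> 0\<close> for positive semidefinite \<open>W, L\<close> (peel off \<open>L\<close> one
  rank-one Schur complement at a time), both \<open>Tr (X (P - R) X Q)\<close> and
  \<open>Tr (X R X (Q - S))\<close> are non-negative, and what remains of \<open>Tr (M + N)\<close> is
  \<open>q X X + q Y X + q Y Y\<close> with \<open>q U V = Tr (U R V S)\<close>. Its real part is the average of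
  \<open>q X X + q Y Y\<close> and \<open>q (X + Y) (X + Y)\<close>, and \<open>Tr (M + N)\<close> is real as a sum of traces
  of products of Hermitian matrices.
\<close>

definition sesq :: "complex^'n^'n \<Rightarrow> complex^'n \<Rightarrow> complex^'n \<Rightarrow> complex" where
  "sesq A x y = (\<Sum>i\<in>UNIV. cnj (x $ i) * (A *v y) $ i)"

lemma qform_sesq: "qform A x = sesq A x x"
  by (simp add: qform_def sesq_def)

lemma sesq_expand: "sesq A x y = (\<Sum>i\<in>UNIV. \<Sum>j\<in>UNIV. cnj (x $ i) * A $ i $ j * y $ j)"
  by (simp add: sesq_def matrix_vector_mult_def sum_distrib_left mult.assoc)

lemma sesq_add_left: "sesq A (x + y) z = sesq A x z + sesq A y z"
  by (simp add: sesq_def distrib_right sum.distrib)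

lemma sesq_add_right: "sesq A x (y + z) = sesq A x y + sesq A x z"
  by (simp add: sesq_def matrix_vector_right_distrib distrib_left sum.distrib)

lemma sesq_scale_left: "sesq A (c *s x) y = cnj c * sesq A x y"
  by (simp add: sesq_def sum_distrib_left mult.assoc)

lemma sesq_scale_right: "sesq A x (c *s y) = c * sesq A x y"
  by (simp add: sesq_expand sum_distrib_left mult_ac)

lemma sesq_add_mat: "sesq (A + B) x y = sesq A x y + sesq B x y"
  by (simp add: sesq_expand distrib_left distrib_right sum.distrib)

lemma sesq_diff_mat: "sesq (A - B) x y = sesq A x y - sesq B x y"
  by (simp add: sesq_expand left_diff_distrib right_diff_distrib sum_subtractf)

lemma matrix_vector_mult_axis: "(A *v axis j 1) $ i = A $ i $ j"
proof -
  have "\<And>k. A $ i $ k * axis j 1 $ k = (if k = j then A $ i $ k else 0)"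
    by (simp add: axis_def)
  then show ?thesis by (simp add: matrix_vector_mult_def)
qed

lemma sesq_axis_left: "sesq A (axis i 1) y = (A *v y) $ i"
proof -
  have "\<And>k. cnj (axis i 1 $ k) * (A *v y) $ k = (if k = i then (A *v y) $ k else 0)"
    by (simp add: axis_def)
  then show ?thesis by (simp add: sesq_def)
qed

lemma sesq_axis_right: "sesq A x (axis j 1) = (\<Sum>k\<in>UNIV. cnj (x $ k) * A $ k $ j)"
  by (simp add: sesq_def matrix_vector_mult_axis)

lemma sesq_axis_axis: "sesq A (axis i 1) (axis j 1) = A $ i $ j"
  by (simp add: sesq_axis_left matrix_vector_mult_axis)

lemma qform_axis: "qform A (axis i 1) = A $ i $ i"
  by (simp add: qform_sesq sesq_axis_axis)

lemma hermitian_entry: "hermitian A \<Longrightarrow> A $ j $ i = cnj (A $ i $ j)"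
  unfolding hermitian_def adjoint_mat_def by (metis vec_lambda_beta)

lemma sesq_hermitian_swap:
  assumes "hermitian A"
  shows "sesq A y x = cnj (sesq A x y)"
proof -
  have "sesq A y x = (\<Sum>j\<in>UNIV. \<Sum>i\<in>UNIV. cnj (y $ j) * A $ j $ i * x $ i)"
    by (simp add: sesq_expand)
  also have "\<dots> = (\<Sum>i\<in>UNIV. \<Sum>j\<in>UNIV. cnj (y $ j) * A $ j $ i * x $ i)"
    by (rule sum.swap)
  also have "\<dots> = cnj (sesq A x y)"
  proof -
    have "\<And>i j. cnj (y $ j) * A $ j $ i * x $ i = cnj (cnj (x $ i) * A $ i $ j * y $ j)"
      by (subst hermitian_entry[OF assms]) (simp add: mult_ac)
    then show ?thesis by (simp only: sesq_expand cnj_sum)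
  qed
  finally show ?thesis .
qed

lemma adjoint_mat_mult: "adjoint_mat (A ** B) = adjoint_mat B ** adjoint_mat A"
  by (simp add: adjoint_mat_def matrix_matrix_mult_def vec_eq_iff mult.commute)

lemma adjoint_mat_add: "adjoint_mat (A + B) = adjoint_mat A + adjoint_mat B"
  by (simp add: adjoint_mat_def vec_eq_iff)

lemma adjoint_mat_diff: "adjoint_mat (A - B) = adjoint_mat A - adjoint_mat B"
  by (simp add: adjoint_mat_def vec_eq_iff)

lemma adjoint_mat_one: "adjoint_mat (mat 1) = mat 1"
  by (simp add: adjoint_mat_def vec_eq_iff mat_def)

lemma hermitian_add: "hermitian A \<Longrightarrow> hermitian B \<Longrightarrow> hermitian (A + B)"
  by (simp add: hermitian_def adjoint_mat_add)

lemma hermitian_diff: "hermitian A \<Longrightarrow> hermitian B \<Longrightarrow> hermitian (A - B)"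
  by (simp add: hermitian_def adjoint_mat_diff)

lemma hermitian_mat_one: "hermitian (mat 1)"
  by (simp add: hermitian_def adjoint_mat_one)

lemma matrix_diff_ldistrib: "(A::'a::comm_ring_1^'n^'n) ** (B - C) = A ** B - A ** C"
  by (simp add: matrix_matrix_mult_def vec_eq_iff algebra_simps sum_subtractf)

lemma matrix_diff_rdistrib: "((A::'a::comm_ring_1^'n^'n) - B) ** C = A ** C - B ** C"
  by (simp add: matrix_matrix_mult_def vec_eq_iff algebra_simps sum_subtractf)

lemma matrix_add_rdistrib: "((A::'a::comm_ring_1^'n^'n) + B) ** C = A ** C + B ** C"
  by (simp add: matrix_matrix_mult_def vec_eq_iff algebra_simps sum.distrib)

lemma sesq_matrix_mult_right: "sesq (H ** K) x y = sesq H x (K *v y)"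
  by (simp add: sesq_def matrix_vector_mul_assoc)

lemma sesq_adjoint_mult_left: "sesq (adjoint_mat K ** H) x y = sesq H (K *v x) y"
proof -
  have "sesq (adjoint_mat K ** H) x y
      = (\<Sum>i\<in>UNIV. cnj (x $ i) * (\<Sum>j\<in>UNIV. cnj (K $ j $ i) * (H *v y) $ j))"
    unfolding sesq_matrix_mult_right by (simp add: sesq_def adjoint_mat_def matrix_vector_mult_def)
  also have "\<dots> = (\<Sum>j\<in>UNIV. \<Sum>i\<in>UNIV. cnj (x $ i) * cnj (K $ j $ i) * (H *v y) $ j)"
    by (simp add: sum_distrib_left mult.assoc) (rule sum.swap)
  also have "\<dots> = sesq H (K *v x) y"
  proof -
    have "\<And>j. cnj ((K *v x) $ j) = (\<Sum>i\<in>UNIV. cnj (x $ i) * cnj (K $ j $ i))"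
      by (simp add: matrix_vector_mult_def mult.commute)
    then show ?thesis by (simp only: sesq_def sum_distrib_right)
  qed
  finally show ?thesis .
qed

lemma psd_adjoint_sandwich: "psd H \<Longrightarrow> psd (adjoint_mat K ** H ** K)"
  unfolding psd_def qform_sesq sesq_matrix_mult_right[of "adjoint_mat K ** H" K]
    sesq_adjoint_mult_left
  by simp

lemma psd_sandwich: "psd H \<Longrightarrow> hermitian K \<Longrightarrow> psd (K ** H ** K)"
  using psd_adjoint_sandwich[of H K] by (simp add: hermitian_def)

lemma psd_add: "psd A \<Longrightarrow> psd B \<Longrightarrow> psd (A + B)"
  by (simp add: psd_def qform_sesq sesq_add_mat)

lemma psd_mat_one: "psd (mat 1)"
  by (simp add: psd_def qform_def sum_nonneg less_eq_complex_def)

lemma psd_diag_nonneg: "psd A \<Longrightarrow> 0 \<le> A $ i $ i"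
  by (metis psd_def qform_axis)

lemma invertible_mat_one_add_psd:
  assumes "psd A"
  shows "invertible (mat 1 + A)"
proof -
  have "x = 0" if "(mat 1 + A) *v x = 0" for x
  proof -
    have "qform (mat 1 + A) x = 0"
      using that by (simp add: qform_def)
    then have "qform (mat 1) x + qform A x = 0"
      by (simp add: qform_sesq sesq_add_mat)
    moreover have "0 \<le> qform A x" "0 \<le> qform (mat 1) x"
      using assms psd_mat_one psd_def by blast+
    ultimately have "(\<Sum>i\<in>UNIV. cnj (x $ i) * x $ i) = 0"
      by (simp add: qform_def add_nonneg_eq_0_iff)
    then have "\<forall>i\<in>UNIV. cnj (x $ i) * x $ i = 0"
      by (subst (asm) sum_nonneg_eq_0_iff) (auto simp: less_eq_complex_def)
    then show "x = 0" by (simp add: vec_eq_iff)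
  qed
  then show ?thesis
    by (simp add: invertible_left_inverse matrix_left_invertible_ker)
qed

lemma
  assumes "invertible (H::complex^'n^'n)"
  shows matrix_inv_right: "H ** matrix_inv H = mat 1"
    and matrix_inv_left: "matrix_inv H ** H = mat 1"
proof -
  have "H ** matrix_inv H = mat 1 \<and> matrix_inv H ** H = mat 1"
    using assms unfolding invertible_def matrix_inv_def by (rule someI_ex)
  then show "H ** matrix_inv H = mat 1" "matrix_inv H ** H = mat 1" by auto
qed

lemma hermitian_matrix_inv:
  assumes "invertible H" "hermitian H"
  shows "hermitian (matrix_inv H)"
proof -
  let ?P = "matrix_inv H"
  have "H ** adjoint_mat ?P = mat 1"
    using arg_cong[OF matrix_inv_left[OF assms(1)], of adjoint_mat] assms(2)
    by (simp add: adjoint_mat_mult adjoint_mat_one hermitian_def)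
  then have "(?P ** H) ** adjoint_mat ?P = ?P"
    by (simp add: matrix_mul_assoc[symmetric])
  then show ?thesis
    by (simp add: matrix_inv_left[OF assms(1)] hermitian_def)
qed

lemma psd_matrix_inv:
  assumes "invertible H" "hermitian H" "psd H"
  shows "psd (matrix_inv H)"
  using psd_sandwich[OF assms(3) hermitian_matrix_inv[OF assms(1,2)]]
  by (simp add: matrix_inv_left[OF assms(1)])

lemma matrix_inv_diff:
  fixes H1 H2 :: "complex^'n^'n"
  assumes "invertible H1" "invertible H2"
  shows "matrix_inv H1 - matrix_inv H2 = matrix_inv H1 ** (H2 - H1) ** matrix_inv H2"
proof -
  have "matrix_inv H1 ** H2 ** matrix_inv H2 = matrix_inv H1"
    by (simp add: matrix_mul_assoc[symmetric] matrix_inv_right[OF assms(2)])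
  moreover have "matrix_inv H1 ** H1 ** matrix_inv H2 = matrix_inv H2"
    by (simp add: matrix_inv_left[OF assms(1)])
  ultimately show ?thesis
    by (simp add: matrix_diff_ldistrib matrix_diff_rdistrib)
qed

lemma psd_matrix_inv_antimono:
  assumes "invertible H1" "hermitian H1" "psd H1"
    and "invertible H2" "hermitian H2" "psd (H2 - H1)"
  shows "psd (matrix_inv H1 - matrix_inv H2)"
proof -
  let ?P1 = "matrix_inv H1" and ?P2 = "matrix_inv H2"
  have h1: "hermitian ?P1" and h2: "hermitian ?P2"
    using hermitian_matrix_inv assms by auto
  have "?P1 ** H1 ** ?P1 = ?P1" "?P1 ** H1 ** ?P2 = ?P2" "?P2 ** H2 ** ?P2 = ?P2"
    by (simp_all add: matrix_inv_left assms(1,4))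
  moreover have "?P2 ** H1 ** ?P1 = ?P2"
    by (simp add: matrix_mul_assoc[symmetric] matrix_inv_right[OF assms(1)])
  ultimately have "?P1 - ?P2 = (?P1 - ?P2) ** H1 ** (?P1 - ?P2) + ?P2 ** (H2 - H1) ** ?P2"
    by (simp only: matrix_diff_ldistrib matrix_diff_rdistrib) (simp add: algebra_simps)
  then show ?thesis
    using psd_add[OF psd_sandwich[OF assms(3) hermitian_diff[OF h1 h2]]
        psd_sandwich[OF assms(6) h2]]
    by simp
qed

lemma cnj_trace_mult: "cnj (trace (A ** B)) = trace (adjoint_mat B ** adjoint_mat A)"
  by (simp add: trace_def matrix_matrix_mult_def adjoint_mat_def mult.commute)

lemma trace_mult_hermitian_real:
  assumes "hermitian A" "hermitian B"
  shows "Im (trace (A ** B)) = 0"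
proof -
  have "cnj (trace (A ** B)) = trace (B ** A)"
    using assms by (simp add: cnj_trace_mult hermitian_def)
  also have "\<dots> = trace (A ** B)"
    by (rule trace_mul_sym)
  finally have "cnj (trace (A ** B)) = trace (A ** B)" .
  then show ?thesis by (simp add: complex_eq_iff)
qed

lemma psd_diag_zero_imp_col_zero:
  assumes "psd A" "hermitian A" "A $ i $ i = 0"
  shows "A $ j $ i = 0"
proof (rule ccontr)
  assume nz: "A $ j $ i \<noteq> 0"
  define a where "a = A $ j $ i"
  define r where "r = Re (A $ j $ j)"
  have "0 \<le> A $ j $ j"
    using assms(1) by (rule psd_diag_nonneg)
  then have d: "A $ j $ j = complex_of_real r" and "0 \<le> r"
    by (simp_all add: r_def less_eq_complex_def complex_eq_iff)
  have "0 < Re a ^ 2 + Im a ^ 2"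
    using nz by (simp add: a_def complex_neq_0)
  \<comment> \<open>the test vector \<open>(r + 1) e\<^sub>i - a e\<^sub>j\<close> has negative energy \<open>-(r + 2) |a|\<^sup>2\<close>\<close>
  define c where "c = complex_of_real (r + 1)"
  define b where "b = - a"
  define v where "v = c *s axis i 1 + b *s axis j 1"
  have "qform A v = cnj c * b * A $ i $ j + cnj b * c * A $ j $ i + cnj b * b * A $ j $ j"
    using assms(3)
    by (simp add: v_def qform_sesq sesq_add_left sesq_add_right sesq_scale_left
        sesq_scale_right sesq_axis_axis algebra_simps)
  also have "\<dots> = complex_of_real (- (r + 2)) * (a * cnj a)"
    using hermitian_entry[OF assms(2), of j i]
    by (simp add: a_def[symmetric] b_def c_def d algebra_simps)
  also have "\<dots> = complex_of_real (- (r + 2) * (Re a ^ 2 + Im a ^ 2))"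
    by (simp only: complex_mult_cnj of_real_mult)
  finally have "Re (qform A v) = - (r + 2) * (Re a ^ 2 + Im a ^ 2)"
    by simp
  moreover have "- (r + 2) * (Re a ^ 2 + Im a ^ 2) < 0"
    using \<open>0 < Re a ^ 2 + Im a ^ 2\<close> \<open>0 \<le> r\<close> by (intro mult_neg_pos) auto
  moreover have "0 \<le> Re (qform A v)"
    using assms(1) by (simp add: psd_def less_eq_complex_def)
  ultimately show False
    by linarith
qed

text \<open>
  Subtracting the rank-one matrix \<open>v v\<^sup>* / A\<^sub>i\<^sub>i\<close>, \<open>v\<close> the \<open>i\<close>-th column of \<open>A\<close>,
  kills row and column \<open>i\<close>.
\<close>

definition schur_compl :: "complex^'n^'n \<Rightarrow> 'n \<Rightarrow> complex^'n^'n" where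
  "schur_compl A i = (\<chi> k l. A $ k $ l - A $ k $ i * A $ i $ l / A $ i $ i)"

lemma hermitian_schur_compl:
  assumes "hermitian A"
  shows "hermitian (schur_compl A i)"
proof -
  have "cnj (A $ l $ k) = A $ k $ l" for k l
    using hermitian_entry[OF assms, of l k] by simp
  then show ?thesis
    by (simp add: hermitian_def adjoint_mat_def schur_compl_def vec_eq_iff mult.commute)
qed

lemma trace_mult_schur_compl:
  assumes "hermitian A"
  shows "trace (W ** A) = trace (W ** schur_compl A i) + qform W (column i A) / A $ i $ i"
proof -
  have he: "cnj (A $ l $ k) = A $ k $ l" for k l
    using hermitian_entry[OF assms, of l k] by simp
  define U where "U = (\<chi> k l. A $ k $ i * A $ i $ l / A $ i $ i)"
  have "A = schur_compl A i + U"
    by (simp add: schur_compl_def U_def vec_eq_iff)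
  moreover have "trace (W ** U) = qform W (column i A) / A $ i $ i"
    by (simp add: trace_def matrix_matrix_mult_def U_def qform_def matrix_vector_mult_def
        column_def sum_divide_distrib sum_distrib_left he mult_ac)
  ultimately show ?thesis
    by (metis matrix_add_ldistrib trace_add)
qed

lemma psd_schur_compl:
  assumes "psd A" "hermitian A" "A $ i $ i \<noteq> 0"
  shows "psd (schur_compl A i)"
  unfolding psd_def
proof
  fix x
  define c where "c = A $ i $ i"
  define a where "a = sesq A (axis i 1) x"
  define U where "U = (\<chi> k l. A $ k $ i * A $ i $ l / c)"
  have cc: "cnj c = c"
    unfolding c_def by (rule hermitian_entry[OF assms(2), symmetric])
  have swap: "sesq A x (axis i 1) = cnj a"
    unfolding a_def by (rule sesq_hermitian_swap[OF assms(2)])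
  have "qform U x = (\<Sum>k\<in>UNIV. \<Sum>l\<in>UNIV. cnj (x $ k) * A $ k $ i * (A $ i $ l * x $ l) / c)"
    by (simp add: qform_def matrix_vector_mult_def U_def sum_distrib_left mult_ac)
  also have "\<dots> = (\<Sum>k\<in>UNIV. cnj (x $ k) * A $ k $ i) * (\<Sum>l\<in>UNIV. A $ i $ l * x $ l) / c"
    by (simp add: sum_distrib_left sum_distrib_right sum_divide_distrib) (rule sum.swap)
  also have "\<dots> = sesq A x (axis i 1) * a / c"
    by (simp add: a_def sesq_axis_right sesq_axis_left matrix_vector_mult_def)
  finally have qU: "qform U x = cnj a * a / c"
    by (simp only: swap)
  \<comment> \<open>completing the square along \<open>e\<^sub>i\<close>\<close>
  define t where "t = - a / c"
  have "qform A (x + t *s axis i 1) = qform A x + t * cnj a + cnj t * a + cnj t * t * c"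
    using swap
    by (simp add: qform_sesq sesq_add_left sesq_add_right sesq_scale_left sesq_scale_right
        sesq_axis_axis a_def[symmetric] c_def algebra_simps)
  also have "\<dots> = qform A x - qform U x"
    using cc assms(3) by (simp add: qU t_def c_def[symmetric] field_simps)
  also have "\<dots> = qform (A - U) x"
    by (simp add: qform_sesq sesq_diff_mat)
  also have "A - U = schur_compl A i"
    by (simp add: schur_compl_def U_def c_def vec_eq_iff)
  finally show "0 \<le> qform (schur_compl A i) x"
    using assms(1) psd_def by metis
qed

lemma complex_divide_nonneg: "0 \<le> (x::complex) \<Longrightarrow> 0 \<le> c \<Longrightarrow> 0 \<le> x / c"
  by (auto simp: less_eq_complex_def Re_divide Im_divide)

lemma trace_mult_psd_nonneg_supported:
  assumes "psd W" "finite S" "psd A" "hermitian A" "\<forall>k l. A $ k $ l \<noteq> 0 \<longrightarrow> k \<in> S \<and> l \<in> S"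
  shows "0 \<le> trace (W ** A)"
  using assms(2-)
proof (induction S arbitrary: A rule: finite_induct)
  case empty
  then have "A = 0"
    by (simp add: vec_eq_iff)
  then show ?case
    by (simp add: trace_def)
next
  case (insert i S)
  show ?case
  proof (cases "A $ i $ i = 0")
    case True
    then have "A $ j $ i = 0" for j
      using psd_diag_zero_imp_col_zero insert.prems(1,2) by blast
    moreover from this have "A $ i $ j = 0" for j
      using hermitian_entry[OF insert.prems(2), of j i] by simp
    ultimately have "\<forall>k l. A $ k $ l \<noteq> 0 \<longrightarrow> k \<in> S \<and> l \<in> S"
      using insert.prems(3) by blast
    then show ?thesis
      using insert.IH insert.prems(1,2) by blast
  next
    case False
    have "schur_compl A i $ k $ l = 0" if "k \<notin> S \<or> l \<notin> S" for k l
    proof (cases "k = i \<or> l = i")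
      case True
      then show ?thesis
        using False by (auto simp: schur_compl_def)
    next
      case False
      with that insert.prems(3) have "A $ k $ l = 0" "A $ k $ i = 0 \<or> A $ i $ l = 0"
        by auto
      then show ?thesis
        by (auto simp: schur_compl_def)
    qed
    then have "0 \<le> trace (W ** schur_compl A i)"
      using insert.IH psd_schur_compl[OF insert.prems(1,2) False]
        hermitian_schur_compl[OF insert.prems(2)] by blast
    moreover have "0 \<le> qform W (column i A) / A $ i $ i"
      using assms(1) psd_diag_nonneg[OF insert.prems(1)]
      by (simp add: psd_def complex_divide_nonneg)
    ultimately show ?thesis
      unfolding trace_mult_schur_compl[OF insert.prems(2), of W i] by (rule add_nonneg_nonneg)
  qed
qed

lemma trace_mult_psd_nonneg:
  "psd W \<Longrightarrow> psd A \<Longrightarrow> hermitian A \<Longrightarrow> 0 \<le> trace (W ** A)"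
  using trace_mult_psd_nonneg_supported[of W UNIV A] by simp

lemma trace_sandwich_nonneg:
  "psd R \<Longrightarrow> psd S \<Longrightarrow> hermitian S \<Longrightarrow> hermitian U \<Longrightarrow> 0 \<le> trace (U ** R ** U ** S)"
  by (simp add: trace_mult_psd_nonneg psd_sandwich)

lemma trace_sandwich_cross_nonneg:
  assumes "psd R" "hermitian R" "psd S" "hermitian S" "hermitian X" "hermitian Y"
  shows "0 \<le> Re (trace (X ** R ** X ** S) + trace (Y ** R ** X ** S) + trace (Y ** R ** Y ** S))"
proof -
  define q where "q U V = trace (U ** R ** V ** S)" for U V
  have q_nonneg: "0 \<le> Re (q U U)" if "hermitian U" for U
    using trace_sandwich_nonneg[OF assms(1,3,4) that] by (simp add: q_def less_eq_complex_def)
  have "q (X + Y) (X + Y) = q X X + q X Y + q Y X + q Y Y"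
    by (simp add: q_def matrix_add_ldistrib matrix_add_rdistrib trace_add)
  moreover have "cnj (q X Y) = q Y X"
  proof -
    have "cnj (q X Y) = trace (S ** (Y ** R ** X))"
      using assms
      by (simp add: q_def cnj_trace_mult adjoint_mat_mult hermitian_def matrix_mul_assoc)
    also have "\<dots> = q Y X"
      by (simp add: q_def trace_mul_sym[of S])
    finally show ?thesis .
  qed
  then have "Re (q X Y) = Re (q Y X)"
    by (metis cnj.simps(1))
  ultimately have "Re (q X X + q Y X + q Y Y)
      = (Re (q X X) + Re (q Y Y) + Re (q (X + Y) (X + Y))) / 2"
    by simp
  also have "0 \<le> \<dots>"
    using q_nonneg assms(5,6) hermitian_add[OF assms(5,6)] by simp
  finally show ?thesis
    by (simp add: q_def)
qed

lemma trace_resolvent_sum_nonneg: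
  fixes H1 H2 H3 H4 :: "complex^'n^'n"
  assumes "invertible H1" "hermitian H1" "psd H1"
    and "invertible H2" "hermitian H2" "psd H2"
    and "invertible H3" "hermitian H3" "psd H3"
    and "invertible H4" "hermitian H4" "psd H4"
    and "psd (H3 - H1)" "psd (H4 - H2)"
  shows "0 \<le> trace ((H2 - H1) ** (matrix_inv H1 - matrix_inv H2)
                  + ((H4 - H3) - (H2 - H1)) ** (matrix_inv H3 - matrix_inv H4))"
proof -
  define X where "X = H2 - H1"
  define Y where "Y = (H4 - H3) - X"
  define P where "P = matrix_inv H1"
  define Q where "Q = matrix_inv H2"
  define R where "R = matrix_inv H3"
  define S where "S = matrix_inv H4"
  have X: "hermitian X" and Y: "hermitian Y"
    using assms by (simp_all add: X_def Y_def hermitian_diff)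
  have P: "hermitian P" and Q: "hermitian Q" "psd Q" and R: "hermitian R" "psd R"
    and S: "hermitian S" "psd S"
    using assms by (simp_all add: P_def Q_def R_def S_def hermitian_matrix_inv psd_matrix_inv)
  have "psd (P - R)" "psd (Q - S)"
    using assms by (simp_all add: P_def Q_def R_def S_def psd_matrix_inv_antimono)
  then have first: "0 \<le> trace (X ** (P - R) ** X ** Q)"
    and second: "0 \<le> trace (X ** R ** X ** (Q - S))"
    using X Q R S by (simp_all add: trace_sandwich_nonneg hermitian_diff)
  have cross:
    "0 \<le> Re (trace (X ** R ** X ** S) + trace (Y ** R ** X ** S) + trace (Y ** R ** Y ** S))"
    using trace_sandwich_cross_nonneg[OF R(2,1) S(2,1) X Y] .
  have PQ: "P - Q = P ** X ** Q" and RS: "R - S = R ** (X + Y) ** S"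
    using assms by (simp_all add: P_def Q_def R_def S_def X_def Y_def matrix_inv_diff)
  have "X ** (P - Q) + Y ** (R - S) = X ** (P - R) ** X ** Q + X ** R ** X ** (Q - S)
      + (X ** R ** X ** S + Y ** R ** X ** S + Y ** R ** Y ** S)"
    unfolding PQ RS by (simp add: matrix_diff_ldistrib matrix_diff_rdistrib matrix_add_ldistrib
        matrix_add_rdistrib matrix_mul_assoc algebra_simps)
  then have "Re (trace (X ** (P - Q) + Y ** (R - S))) \<ge> 0"
    using first second cross by (simp add: trace_add less_eq_complex_def)
  moreover have "Im (trace (X ** (P - Q) + Y ** (R - S))) = 0"
    using X Y P Q R S
    by (simp add: trace_add trace_mult_hermitian_real hermitian_diff)
  ultimately show ?thesis
    by (simp add: less_eq_complex_def X_def P_def Q_def R_def S_def Y_def)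
qed

theorem lemma1:
  fixes A' A'' B' B'' :: "complex^'n^'n"
  assumes "hermitian A'" "psd A'"
    and "hermitian A''" "psd A''"
    and "hermitian B'" "psd B'"
    and "hermitian B''" "psd B''"
    and "A' \<noteq> A'' \<or> B' \<noteq> B''"
    and "loewner_ge A' A'' \<or> loewner_gt A'' A'"
    and "loewner_ge B' B'' \<or> loewner_gt B'' B'"
  shows "0 \<le> trace ((A'' - A') ** (matrix_inv (mat 1 + A') - matrix_inv (mat 1 + A''))
             + (B'' - B') ** (matrix_inv (mat 1 + B' + A') - matrix_inv (mat 1 + B'' + A'')))"
proof -
  have shifted: "invertible (mat 1 + H)" "hermitian (mat 1 + H)" "psd (mat 1 + H)"
    if "hermitian H" "psd H" for H :: "complex^'n^'n"
    using that by (simp_all add: invertible_mat_one_add_psd hermitian_add hermitian_mat_one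
        psd_add psd_mat_one)
  have "hermitian (B' + A')" "psd (B' + A')" "hermitian (B'' + A'')" "psd (B'' + A'')"
    using assms by (simp_all add: hermitian_add psd_add)
  then have "0 \<le> trace (((mat 1 + A'') - (mat 1 + A')) **
        (matrix_inv (mat 1 + A') - matrix_inv (mat 1 + A''))
      + (((mat 1 + (B'' + A'')) - (mat 1 + (B' + A'))) - ((mat 1 + A'') - (mat 1 + A'))) **
        (matrix_inv (mat 1 + (B' + A')) - matrix_inv (mat 1 + (B'' + A''))))"
    using assms(1-4,6,8)
    by (intro trace_resolvent_sum_nonneg shifted) (simp_all add: algebra_simps)
  then show ?thesis
    by (simp add: algebra_simps)
qed

end
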